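(* Let $X$ and $Y$ be Hausdorff compact spaces and $\pi: X \to Y$ a fully closed continuous surjection. For each $y \in Y$ fix a point $0_y \in \pi^{-1}(y)$ and let $H^0_y = \{g \in C(\pi^{-1}(y)) : g(0_y) = 0\}$ with the supremum norm. Let $H = \bigoplus_{c_0(Y)} H^0_y$ be the $c_0$-sum, i.e. the space of families $h = (h_y)_{y\in Y}$ with $h_y \in H^0_y$ such that for every $\varepsilon>0$ the set $\{y : \|h_y\| > \varepsilon\}$ is finite, normed by $\|h\| = \sup_y \|h_y\|$. For $f \in C(X)$ put $f_y = \left(f - f(0_y)\right)|_{\pi^{-1}(y)} \in H^0_y$ and $T f = (f_y)_{y \in Y}$. Then for every $h \in H$ there exists $f \in C(X)$ with $Tf = h$; that is, $T$ maps $C(X)$ onto $H$.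
   Context: A continuous surjection $\pi: X \to Y$ between Hausdorff compacta is fully closed if for any two closed disjoint subsets $F_1, F_2 \subset X$ the set $\pi(F_1)\cap\pi(F_2)$ is finite. $C(K)$ denotes the Banach space of real continuous functions on $K$ with the sup norm. *)

theory Defs
  imports "HOL-Analysis.Analysis"
begin

definition fully_closed :: "'a topology \<Rightarrow> 'b topology \<Rightarrow> ('a \<Rightarrow> 'b) \<Rightarrow> bool" where
  "fully_closed X Y \<pi> \<longleftrightarrow>
     continuous_map X Y \<pi> \<and> \<pi> ` topspace X = topspace Y \<and>
     (\<forall>F1 F2. closedin X F1 \<and> closedin X F2 \<and> F1 \<inter> F2 = {} \<longrightarrow>
        finite (\<pi> ` F1 \<inter> \<pi> ` F2))"

definition fibre :: "'a topology \<Rightarrow> ('a \<Rightarrow> 'b) \<Rightarrow> 'b \<Rightarrow> 'a set" where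
  "fibre X \<pi> y = {x \<in> topspace X. \<pi> x = y}"

definition fibre_norm :: "'a topology \<Rightarrow> ('a \<Rightarrow> 'b) \<Rightarrow> 'b \<Rightarrow> ('a \<Rightarrow> real) \<Rightarrow> real" where
  "fibre_norm X \<pi> y g = (SUP x \<in> fibre X \<pi> y. \<bar>g x\<bar>)"

definition in_c0_sum :: "'a topology \<Rightarrow> 'b topology \<Rightarrow> ('a \<Rightarrow> 'b) \<Rightarrow> ('b \<Rightarrow> 'a) \<Rightarrow> ('b \<Rightarrow> 'a \<Rightarrow> real) \<Rightarrow> bool" where
  "in_c0_sum X Y \<pi> z h \<longleftrightarrow>
     (\<forall>y \<in> topspace Y. continuous_map (subtopology X (fibre X \<pi> y)) euclideanreal (h y)
                       \<and> h y (z y) = 0) \<and>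
     (\<forall>\<epsilon>>0. finite {y \<in> topspace Y. fibre_norm X \<pi> y (h y) > \<epsilon>})"

end

theory Submission
  imports Defs
begin

text \<open>For finite \<open>A \<subseteq> Y\<close>, the open subsets of \<open>X\<close> that are unions of fibres over
  points outside \<open>A\<close> form a normal topology: by full closedness only finitely many fibres meet
  both of two disjoint closed sets. Tietze's theorem in this topology extends a bounded family
  \<open>h\<^sub>y\<close>, \<open>y \<in> A\<close>, to one continuous function on \<open>X\<close> that is constant on every fibre outside
  \<open>A\<close>. Splitting \<open>Y\<close> into the finite dyadic levels \<open>2\<^sup>-\<^sup>k < \<parallel>h\<^sub>y\<parallel> \<le> 2\<^sup>1\<^sup>-\<^sup>k\<close>, the
  extensions for the levels have geometrically decreasing sup norms, so their sum \<open>f\<close> converges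
  uniformly; on the fibre over \<open>y\<close> only the summand of the level of \<open>y\<close> is non-constant,
  whence \<open>f x - f (0\<^sub>y) = h\<^sub>y x\<close>.\<close>

definition saturated_off :: "'a topology \<Rightarrow> ('a \<Rightarrow> 'b) \<Rightarrow> 'b set \<Rightarrow> 'a set \<Rightarrow> bool" where
  "saturated_off X \<pi> A U \<longleftrightarrow>
     (\<forall>x\<in>U. \<forall>x'\<in>topspace X. \<pi> x' = \<pi> x \<and> \<pi> x \<notin> A \<longrightarrow> x' \<in> U)"

text \<open>This topology stands in for the quotient of \<open>X\<close> that collapses every fibre over a point
  outside \<open>A\<close>: its continuous real functions are the continuous functions on \<open>X\<close> that are
  constant on those fibres.\<close>
definition collapse_topology :: "'a topology \<Rightarrow> ('a \<Rightarrow> 'b) \<Rightarrow> 'b set \<Rightarrow> 'a topology" where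
  "collapse_topology X \<pi> A = topology (\<lambda>U. openin X U \<and> saturated_off X \<pi> A U)"

lemma openin_collapse_topology:
  "openin (collapse_topology X \<pi> A) U \<longleftrightarrow> openin X U \<and> saturated_off X \<pi> A U"
proof -
  have "istopology (\<lambda>U. openin X U \<and> saturated_off X \<pi> A U)"
    unfolding istopology_def saturated_off_def by auto
  then show ?thesis
    unfolding collapse_topology_def by (simp add: topology_inverse')
qed

lemma topspace_collapse_topology [simp]: "topspace (collapse_topology X \<pi> A) = topspace X"
proof -
  have "openin (collapse_topology X \<pi> A) (topspace X)"
    unfolding openin_collapse_topology saturated_off_def by auto
  then show ?thesis
    by (metis openin_collapse_topology openin_subset openin_topspace subset_antisym)
qed

lemma saturated_off_Diff:
  assumes "saturated_off X \<pi> A S"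
  shows "saturated_off X \<pi> A (topspace X - S)"
  unfolding saturated_off_def
proof (intro ballI impI)
  fix x x' assume "x \<in> topspace X - S" "x' \<in> topspace X" "\<pi> x' = \<pi> x \<and> \<pi> x \<notin> A"
  then show "x' \<in> topspace X - S"
    using assms unfolding saturated_off_def by (metis DiffD1 DiffD2 DiffI)
qed

lemma saturated_off_Diff_iff:
  assumes "S \<subseteq> topspace X"
  shows "saturated_off X \<pi> A (topspace X - S) \<longleftrightarrow> saturated_off X \<pi> A S"
  using saturated_off_Diff[of X \<pi> A "topspace X - S"] saturated_off_Diff[of X \<pi> A S] assms
  by (metis Diff_Diff_Int inf.absorb_iff2)

lemma closedin_collapse_topology:
  "closedin (collapse_topology X \<pi> A) S \<longleftrightarrow> closedin X S \<and> saturated_off X \<pi> A S"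
  unfolding closedin_def[of "collapse_topology X \<pi> A"] openin_collapse_topology
  using saturated_off_Diff_iff closedin_def by (metis topspace_collapse_topology)

lemma continuous_map_from_collapse_topology:
  assumes "continuous_map (collapse_topology X \<pi> A) Z e"
  shows "continuous_map X Z e"
  using assms unfolding continuous_map openin_collapse_topology by simp

lemma continuous_map_collapse_topology_fibre_const:
  assumes "continuous_map (collapse_topology X \<pi> A) euclideanreal e"
    and "x \<in> topspace X" "x' \<in> topspace X" "\<pi> x = \<pi> x'" "\<pi> x \<notin> A"
  shows "e x = e x'"
proof (rule ccontr)
  assume "e x \<noteq> e x'"
  have "openin (collapse_topology X \<pi> A) {t \<in> topspace X. e t \<in> - {e x'}}"
    using assms(1) unfolding continuous_map by auto
  then have "saturated_off X \<pi> A {t \<in> topspace X. e t \<in> - {e x'}}"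
    unfolding openin_collapse_topology by blast
  moreover have "x \<in> {t \<in> topspace X. e t \<in> - {e x'}}"
    using \<open>e x \<noteq> e x'\<close> assms(2) by auto
  ultimately have "x' \<in> {t \<in> topspace X. e t \<in> - {e x'}}"
    using assms(3-5) unfolding saturated_off_def by (metis (no_types, lifting))
  then show False by simp
qed

lemma subtopology_collapse_topology:
  assumes "closedin X F" "\<pi> ` F \<subseteq> A"
  shows "subtopology (collapse_topology X \<pi> A) F = subtopology X F"
  unfolding topology_eq
proof (intro allI iffI)
  fix U assume "openin (subtopology (collapse_topology X \<pi> A) F) U"
  then show "openin (subtopology X F) U"
    unfolding openin_subtopology openin_collapse_topology by blast
next
  fix U assume "openin (subtopology X F) U"
  then obtain T where T: "openin X T" "U = T \<inter> F"
    unfolding openin_subtopology by blast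
  have "openin X (T \<union> (topspace X - F))"
    using T(1) assms(1) by (simp add: openin_Un openin_diff)
  moreover have "saturated_off X \<pi> A (T \<union> (topspace X - F))"
    using assms(2) unfolding saturated_off_def by auto
  moreover have "U = (T \<union> (topspace X - F)) \<inter> F"
    using T by auto
  ultimately show "openin (subtopology (collapse_topology X \<pi> A) F) U"
    unfolding openin_subtopology openin_collapse_topology by blast
qed

lemma closedin_preimage_finite:
  assumes "continuous_map X Y \<pi>" "t1_space Y" "finite B"
  shows "closedin X {x \<in> topspace X. \<pi> x \<in> B}"
proof -
  have "closedin Y (B \<inter> topspace Y)"
    using assms(2,3) by (simp add: t1_space_closedin_finite)
  then have "closedin X {x \<in> topspace X. \<pi> x \<in> B \<inter> topspace Y}"
    using assms(1) closedin_continuous_map_preimage by blast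
  moreover have "{x \<in> topspace X. \<pi> x \<in> B \<inter> topspace Y} = {x \<in> topspace X. \<pi> x \<in> B}"
    using assms(1) by (auto dest: continuous_map_image_subset_topspace)
  ultimately show ?thesis by simp
qed

lemma closedin_fibre:
  assumes "continuous_map X Y \<pi>" "t1_space Y"
  shows "closedin X (fibre X \<pi> y)"
proof -
  have "fibre X \<pi> y = {x \<in> topspace X. \<pi> x \<in> {y}}"
    unfolding fibre_def by simp
  then show ?thesis
    using closedin_preimage_finite[OF assms, of "{y}"] by (simp only: finite.emptyI finite_insert)
qed

lemma saturated_off_open_between:
  assumes nX: "normal_space X" and t1Y: "t1_space Y" and cl: "closed_map X Y \<pi>"
    and fc: "fully_closed X Y \<pi>"
    and C: "closedin X C" "saturated_off X \<pi> A C" and V: "openin X V" "C \<subseteq> V"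
  obtains W where "openin X W" "saturated_off X \<pi> A W" "C \<subseteq> W" "W \<subseteq> V"
proof -
  obtain V' where V': "openin X V'" "C \<subseteq> V'" "X closure_of V' \<subseteq> V"
    using nX C(1) V unfolding normal_space_alt by meson
  have V'_closure: "V' \<subseteq> X closure_of V'"
    using V'(1) by (simp add: closure_of_subset openin_subset)
  define D where "D = topspace X - V"
  have cont: "continuous_map X Y \<pi>"
    using fc by (simp add: fully_closed_def)
  have D: "closedin X D" "X closure_of V' \<inter> D = {}"
    using V V'(3) unfolding D_def by auto
  define B where "B = \<pi> ` (X closure_of V') \<inter> \<pi> ` D"
  have "finite B"
    using fc D unfolding fully_closed_def B_def by (meson closedin_closure_of)
  txt \<open>Only the finitely many fibres over \<open>B\<close> meet both \<open>X closure_of V'\<close> and \<open>D\<close>;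
    removing those outside \<open>A\<close> from \<open>V'\<close> and adding every fibre that misses \<open>D\<close> gives a
    saturated set.\<close>
  define P where "P = {x \<in> topspace X. \<pi> x \<in> B - A}"
  define Q where "Q = {x \<in> topspace X. \<pi> x \<in> \<pi> ` D}"
  define W where "W = (V' - P) \<union> (topspace X - Q)"
  have "closedin X P"
    unfolding P_def using closedin_preimage_finite[OF cont t1Y] \<open>finite B\<close> by blast
  moreover have "closedin X Q"
    unfolding Q_def using D(1) cl closedin_continuous_map_preimage[OF cont]
    by (simp add: closed_map_def)
  ultimately have "openin X W"
    unfolding W_def using V'(1) by (simp add: openin_Un openin_diff)
  moreover have "saturated_off X \<pi> A W"
    unfolding saturated_off_def
  proof (intro ballI impI)
    fix x x' assume x: "x \<in> W" "x' \<in> topspace X" "\<pi> x' = \<pi> x \<and> \<pi> x \<notin> A"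
    have "\<pi> x \<notin> \<pi> ` D"
    proof
      assume "\<pi> x \<in> \<pi> ` D"
      with x(1) openin_subset[OF V'(1)] have "x \<in> V'" "x \<notin> P" "x \<in> topspace X"
        unfolding W_def Q_def by auto
      with \<open>\<pi> x \<in> \<pi> ` D\<close> x(3) V'_closure show False
        unfolding P_def B_def by auto
    qed
    with x(2,3) show "x' \<in> W"
      unfolding W_def Q_def by simp
  qed
  moreover have "C \<subseteq> W"
  proof
    fix x assume "x \<in> C"
    then have "x \<in> topspace X" "x \<in> V'"
      using C(1) V'(2) closedin_subset by blast+
    moreover have "\<pi> x \<notin> \<pi> ` D" if "\<pi> x \<notin> A"
    proof
      assume "\<pi> x \<in> \<pi> ` D"
      then obtain d where "d \<in> D" "\<pi> d = \<pi> x"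
        by auto
      then have "d \<in> C"
        using C(2) \<open>x \<in> C\<close> that unfolding saturated_off_def D_def by blast
      with \<open>d \<in> D\<close> V(2) show False
        unfolding D_def by blast
    qed
    ultimately show "x \<in> W"
      unfolding W_def P_def Q_def by blast
  qed
  moreover have "W \<subseteq> V"
    using V'(3) V'_closure unfolding W_def Q_def D_def by blast
  ultimately show ?thesis
    using that by blast
qed

lemma normal_space_collapse_topology:
  assumes "normal_space X" "t1_space Y" "closed_map X Y \<pi>" "fully_closed X Y \<pi>"
  shows "normal_space (collapse_topology X \<pi> A)"
  unfolding normal_space_def
proof (intro allI impI)
  fix S T
  assume "closedin (collapse_topology X \<pi> A) S \<and> closedin (collapse_topology X \<pi> A) T \<and> disjnt S T"
  then have S: "closedin X S" "saturated_off X \<pi> A S" and T: "closedin X T" "saturated_off X \<pi> A T"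
    and "disjnt S T"
    unfolding closedin_collapse_topology by blast+
  obtain U V where UV: "openin X U" "openin X V" "S \<subseteq> U" "T \<subseteq> V" "disjnt U V"
    using assms(1) S T \<open>disjnt S T\<close> unfolding normal_space_def by meson
  obtain U' where "openin X U'" "saturated_off X \<pi> A U'" "S \<subseteq> U'" "U' \<subseteq> U"
    using saturated_off_open_between[OF assms S UV(1,3)] .
  moreover obtain V' where "openin X V'" "saturated_off X \<pi> A V'" "T \<subseteq> V'" "V' \<subseteq> V"
    using saturated_off_open_between[OF assms T UV(2,4)] .
  ultimately show "\<exists>U V. openin (collapse_topology X \<pi> A) U \<and> openin (collapse_topology X \<pi> A) V
                       \<and> S \<subseteq> U \<and> T \<subseteq> V \<and> disjnt U V"
    using UV(5) unfolding openin_collapse_topology by (meson disjnt_subset1 disjnt_subset2)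
qed

lemma continuous_map_on_finite_union_of_fibres:
  assumes "continuous_map X Y \<pi>" "t1_space Y" "finite A"
    and "\<And>y. y \<in> A \<Longrightarrow> continuous_map (subtopology X (fibre X \<pi> y)) euclideanreal (h y)"
  shows "continuous_map (subtopology X {x \<in> topspace X. \<pi> x \<in> A}) euclideanreal (\<lambda>x. h (\<pi> x) x)"
proof (rule pasting_lemma_closed[where I=A and T="fibre X \<pi>" and f=h])
  fix y assume "y \<in> A"
  then have sub: "fibre X \<pi> y \<subseteq> {x \<in> topspace X. \<pi> x \<in> A}"
    unfolding fibre_def by auto
  show "closedin (subtopology X {x \<in> topspace X. \<pi> x \<in> A}) (fibre X \<pi> y)"
    using closedin_subset_topspace[OF closedin_fibre[OF assms(1,2)] sub] .
  show "continuous_map (subtopology (subtopology X {x \<in> topspace X. \<pi> x \<in> A}) (fibre X \<pi> y))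
          euclideanreal (h y)"
    using assms(4)[OF \<open>y \<in> A\<close>] sub by (simp add: subtopology_subtopology Int_absorb1)
next
  fix x assume "x \<in> topspace (subtopology X {x \<in> topspace X. \<pi> x \<in> A})"
  then show "\<exists>y. y \<in> A \<and> x \<in> fibre X \<pi> y \<and> h (\<pi> x) x = h y x"
    unfolding fibre_def by auto
qed (auto simp: fibre_def assms(3))

lemma fibrewise_Tietze_extension:
  assumes "normal_space X" "t1_space Y" "closed_map X Y \<pi>" "fully_closed X Y \<pi>" "finite A"
    and hc: "\<And>y. y \<in> A \<Longrightarrow> continuous_map (subtopology X (fibre X \<pi> y)) euclideanreal (h y)"
    and "M \<ge> 0"
    and hb: "\<And>y x. y \<in> A \<Longrightarrow> x \<in> fibre X \<pi> y \<Longrightarrow> \<bar>h y x\<bar> \<le> M"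
  obtains e where "continuous_map X euclideanreal e" "\<And>x. x \<in> topspace X \<Longrightarrow> \<bar>e x\<bar> \<le> M"
    "\<And>y x. y \<in> A \<Longrightarrow> x \<in> fibre X \<pi> y \<Longrightarrow> e x = h y x"
    "\<And>x x'. x \<in> topspace X \<Longrightarrow> x' \<in> topspace X \<Longrightarrow> \<pi> x = \<pi> x' \<Longrightarrow> \<pi> x \<notin> A \<Longrightarrow> e x = e x'"
proof -
  have cont: "continuous_map X Y \<pi>"
    using assms(4) by (simp add: fully_closed_def)
  define F where "F = {x \<in> topspace X. \<pi> x \<in> A}"
  have "closedin X F"
    unfolding F_def using closedin_preimage_finite[OF cont assms(2,5)] .
  have closed_F: "closedin (collapse_topology X \<pi> A) F"
    using \<open>closedin X F\<close> unfolding closedin_collapse_topology saturated_off_def F_def by auto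
  have "\<pi> ` F \<subseteq> A"
    unfolding F_def by auto
  then have "subtopology (collapse_topology X \<pi> A) F = subtopology X F"
    by (rule subtopology_collapse_topology[OF \<open>closedin X F\<close>])
  then have cont_F: "continuous_map (subtopology (collapse_topology X \<pi> A) F) euclideanreal (\<lambda>x. h (\<pi> x) x)"
    using continuous_map_on_finite_union_of_fibres[OF cont assms(2,5) hc] unfolding F_def by simp
  have bounded_F: "(\<lambda>x. h (\<pi> x) x) ` F \<subseteq> {-M..M}"
  proof
    fix v assume "v \<in> (\<lambda>x. h (\<pi> x) x) ` F"
    then obtain x where "x \<in> F" "v = h (\<pi> x) x"
      by blast
    then have "\<bar>v\<bar> \<le> M"
      using hb unfolding F_def fibre_def by simp
    then show "v \<in> {-M..M}"
      by (auto simp: abs_le_iff)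
  qed
  obtain e where e: "continuous_map (collapse_topology X \<pi> A) euclideanreal e"
    "\<And>x. x \<in> F \<Longrightarrow> e x = h (\<pi> x) x" "e ` topspace (collapse_topology X \<pi> A) \<subseteq> {-M..M}"
    using Tietze_extension_closed_real_interval[OF normal_space_collapse_topology[OF assms(1-4)]
        closed_F cont_F bounded_F] \<open>M \<ge> 0\<close> by auto
  show ?thesis
  proof
    show "continuous_map X euclideanreal e"
      using continuous_map_from_collapse_topology[OF e(1)] .
    show "\<bar>e x\<bar> \<le> M" if "x \<in> topspace X" for x
      using e(3) that by (force simp: abs_le_iff image_subset_iff)
    show "e x = h y x" if "y \<in> A" "x \<in> fibre X \<pi> y" for y x
      using e(2) that unfolding F_def fibre_def by auto
    show "e x = e x'" if "x \<in> topspace X" "x' \<in> topspace X" "\<pi> x = \<pi> x'" "\<pi> x \<notin> A" for x x'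
      using continuous_map_collapse_topology_fibre_const[OF e(1) that] .
  qed
qed

lemma abs_le_SUP_abs_compactin:
  assumes "compactin X S" "continuous_map (subtopology X S) euclideanreal g" "x \<in> S"
  shows "\<bar>g x\<bar> \<le> (SUP x\<in>S. \<bar>g x\<bar>)"
proof -
  have "compactin (subtopology X S) S"
    using assms(1) by (simp add: compactin_subtopology)
  then have "compact (g ` S)"
    using image_compactin[OF _ assms(2)] by simp
  then obtain b where "\<forall>v\<in>g ` S. \<bar>v\<bar> \<le> b"
    using compact_imp_bounded bounded_real by blast
  then have "bdd_above ((\<lambda>x. \<bar>g x\<bar>) ` S)"
    by (auto intro: bdd_aboveI2)
  then show ?thesis
    using assms(3) by (rule cSUP_upper2) simp
qed

text \<open>\<open>lev y\<close> is the least \<open>k\<close> with \<open>2\<^sup>-\<^sup>k < N y\<close>; the constant \<open>c\<close> absorbs the finitely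
  many values \<open>N y > 1\<close> at level \<open>0\<close>.\<close>
lemma vanishing_family_dyadic_levels:
  fixes N :: "'b \<Rightarrow> real"
  assumes "\<And>\<epsilon>. \<epsilon> > 0 \<Longrightarrow> finite {y \<in> S. N y > \<epsilon>}"
  obtains c :: real and L :: "nat \<Rightarrow> 'b set"
  where "c \<ge> 0" "\<And>k. finite (L k)" "disjoint_family L" "(\<Union>k. L k) = {y \<in> S. N y > 0}"
    "\<And>k y. y \<in> L k \<Longrightarrow> N y \<le> c * (1/2) ^ k"
proof -
  define lev where "lev y = (LEAST k. (1/2::real) ^ k < N y)" for y
  define L where "L k = {y \<in> S. 0 < N y \<and> lev y = k}" for k
  have lev_less: "(1/2::real) ^ lev y < N y" if "N y > 0" for y
    unfolding lev_def using real_arch_pow_inv[OF that, of "1/2"] by (auto intro: LeastI_ex)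
  have lev_ge: "N y \<le> (1/2::real) ^ (lev y - 1)" if "lev y > 0" for y
  proof -
    have "lev y - 1 < lev y"
      using that by simp
    then show ?thesis
      unfolding lev_def by (metis not_less_Least not_less)
  qed
  have finite_L: "finite (L k)" for k
    unfolding L_def by (rule finite_subset[OF _ assms[of "(1/2) ^ k"]]) (auto dest: lev_less)
  define c where "c = Max (insert 2 (N ` L 0))"
  have "c \<ge> 2"
    unfolding c_def using finite_L by simp
  moreover have "N y \<le> c * (1/2) ^ k" if "y \<in> L k" for k y
  proof (cases "k = 0")
    case True
    then show ?thesis
      unfolding c_def using finite_L that by simp
  next
    case False
    then have "N y \<le> 2 * (1/2) ^ k"
      using that lev_ge[of y] unfolding L_def by (cases k) auto
    also have "\<dots> \<le> c * (1/2) ^ k"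
      using \<open>c \<ge> 2\<close> by (intro mult_right_mono) auto
    finally show ?thesis .
  qed
  moreover have "disjoint_family L" "(\<Union>k. L k) = {y \<in> S. N y > 0}"
    unfolding disjoint_family_on_def L_def by auto
  ultimately show ?thesis
    using that[of c L] finite_L by simp
qed

lemma continuous_map_suminf:
  fixes e :: "nat \<Rightarrow> 'a \<Rightarrow> real"
  assumes "\<And>k. continuous_map X euclideanreal (e k)"
    and "\<And>k x. x \<in> topspace X \<Longrightarrow> \<bar>e k x\<bar> \<le> M k" and "summable M"
  shows "continuous_map X euclideanreal (\<lambda>x. \<Sum>k. e k x)"
proof -
  have lim: "uniform_limit (topspace X) (\<lambda>n x. \<Sum>k<n. e k x) (\<lambda>x. \<Sum>k. e k x) sequentially"
    using assms(2) by (intro Weierstrass_m_test[OF _ assms(3)]) simp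
  have "continuous_map X Met_TC.mtopology (\<lambda>x. \<Sum>k. e k x)"
  proof (intro Met_TC.continuous_map_uniform_limit[where F=sequentially and f="\<lambda>n x. \<Sum>k<n. e k x"])
    show "\<forall>\<^sub>F n in sequentially. continuous_map X Met_TC.mtopology (\<lambda>x. \<Sum>k<n. e k x)"
      by (intro always_eventually allI) (simp add: continuous_map_sum assms(1))
  next
    fix \<epsilon> :: real
    assume "\<epsilon> > 0"
    then show "\<forall>\<^sub>F n in sequentially. \<forall>x\<in>topspace X. (\<Sum>k. e k x) \<in> UNIV \<and> dist (\<Sum>k<n. e k x) (\<Sum>k. e k x) < \<epsilon>"
      using uniform_limitD[OF lim] by simp
  qed simp
  then show ?thesis
    by simp
qed

lemma suminf_diff_eq_single:
  fixes a b :: "nat \<Rightarrow> real"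
  assumes "summable a" "summable b" "\<And>k. k \<noteq> l \<Longrightarrow> a k = b k"
  shows "suminf a - suminf b = a l - b l"
proof -
  have "(\<lambda>k. a k - b k) = (\<lambda>k. if k = l then a l - b l else 0)"
    using assms(3) by auto
  then show ?thesis
    using suminf_diff[OF assms(1,2)] sums_single[of l "\<lambda>_. a l - b l"] sums_unique by metis
qed

lemma fibrewise_Tietze_extensions:
  assumes "normal_space X" "t1_space Y" "closed_map X Y \<pi>" "fully_closed X Y \<pi>"
    and "\<And>k. finite (L k)"
    and hc: "\<And>y. y \<in> (\<Union>k. L k) \<Longrightarrow> continuous_map (subtopology X (fibre X \<pi> y)) euclideanreal (h y)"
    and hb: "\<And>k y x. y \<in> L k \<Longrightarrow> x \<in> fibre X \<pi> y \<Longrightarrow> \<bar>h y x\<bar> \<le> M k"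
    and "\<And>k. M k \<ge> 0"
  obtains e :: "nat \<Rightarrow> 'a \<Rightarrow> real" where "\<And>k. continuous_map X euclideanreal (e k)"
    "\<And>k x. x \<in> topspace X \<Longrightarrow> \<bar>e k x\<bar> \<le> M k"
    "\<And>k y x. y \<in> L k \<Longrightarrow> x \<in> fibre X \<pi> y \<Longrightarrow> e k x = h y x"
    "\<And>k y x x'. y \<notin> L k \<Longrightarrow> x \<in> fibre X \<pi> y \<Longrightarrow> x' \<in> fibre X \<pi> y \<Longrightarrow> e k x = e k x'"
proof -
  let ?extends = "\<lambda>k e. continuous_map X euclideanreal e \<and> (\<forall>x\<in>topspace X. \<bar>e x\<bar> \<le> M k)
          \<and> (\<forall>y\<in>L k. \<forall>x\<in>fibre X \<pi> y. e x = h y x)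
          \<and> (\<forall>y. y \<notin> L k \<longrightarrow> (\<forall>x\<in>fibre X \<pi> y. \<forall>x'\<in>fibre X \<pi> y. e x = e x'))"
  have level_extensions: "\<forall>k. \<exists>e. ?extends k e"
  proof
    fix k
    have hc_k: "continuous_map (subtopology X (fibre X \<pi> y)) euclideanreal (h y)" if "y \<in> L k" for y
      using hc that by blast
    obtain e where e: "continuous_map X euclideanreal e" "\<And>x. x \<in> topspace X \<Longrightarrow> \<bar>e x\<bar> \<le> M k"
      "\<And>y x. y \<in> L k \<Longrightarrow> x \<in> fibre X \<pi> y \<Longrightarrow> e x = h y x"
      "\<And>x x'. x \<in> topspace X \<Longrightarrow> x' \<in> topspace X \<Longrightarrow> \<pi> x = \<pi> x' \<Longrightarrow> \<pi> x \<notin> L k \<Longrightarrow> e x = e x'"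
      using fibrewise_Tietze_extension[OF assms(1-5) hc_k \<open>M k \<ge> 0\<close> hb[where k=k]] by blast
    have "\<forall>y. y \<notin> L k \<longrightarrow> (\<forall>x\<in>fibre X \<pi> y. \<forall>x'\<in>fibre X \<pi> y. e x = e x')"
      using e(4) unfolding fibre_def by auto
    with e(1-3) show "\<exists>e. ?extends k e"
      by blast
  qed
  show ?thesis
    using choice[OF level_extensions] that by blast
qed

lemma fibrewise_extension_from_finite_levels:
  assumes "normal_space X" "t1_space Y" "closed_map X Y \<pi>" "fully_closed X Y \<pi>"
    and "\<And>k. finite (L k)" "disjoint_family L"
    and "\<And>y. y \<in> (\<Union>k. L k) \<Longrightarrow> continuous_map (subtopology X (fibre X \<pi> y)) euclideanreal (h y)"
    and "\<And>k y x. y \<in> L k \<Longrightarrow> x \<in> fibre X \<pi> y \<Longrightarrow> \<bar>h y x\<bar> \<le> M k"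
    and "\<And>k. M k \<ge> 0" "summable M"
    and h_const: "\<And>y x x'. y \<notin> (\<Union>k. L k) \<Longrightarrow> x \<in> fibre X \<pi> y \<Longrightarrow> x' \<in> fibre X \<pi> y \<Longrightarrow> h y x = h y x'"
  obtains f where "continuous_map X euclideanreal f"
    "\<And>y x x'. x \<in> fibre X \<pi> y \<Longrightarrow> x' \<in> fibre X \<pi> y \<Longrightarrow> f x - f x' = h y x - h y x'"
proof -
  obtain e where e: "\<And>k. continuous_map X euclideanreal (e k)"
    "\<And>k x. x \<in> topspace X \<Longrightarrow> \<bar>e k x\<bar> \<le> M k"
    "\<And>k y x. y \<in> L k \<Longrightarrow> x \<in> fibre X \<pi> y \<Longrightarrow> e k x = h y x"
    "\<And>k y x x'. y \<notin> L k \<Longrightarrow> x \<in> fibre X \<pi> y \<Longrightarrow> x' \<in> fibre X \<pi> y \<Longrightarrow> e k x = e k x'"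
    using fibrewise_Tietze_extensions[where L=L and M=M, OF assms(1-5,7-9)] by blast
  have summable: "summable (\<lambda>k. e k x)" if "x \<in> fibre X \<pi> y" for x y
    using that e(2) unfolding fibre_def by (intro summable_comparison_test'[OF \<open>summable M\<close>, of 0]) auto
  show ?thesis
  proof
    show "continuous_map X euclideanreal (\<lambda>x. \<Sum>k. e k x)"
      using continuous_map_suminf[OF e(1,2) \<open>summable M\<close>] .
  next
    fix y x x' assume x: "x \<in> fibre X \<pi> y" "x' \<in> fibre X \<pi> y"
    show "(\<Sum>k. e k x) - (\<Sum>k. e k x') = h y x - h y x'"
    proof (cases "y \<in> (\<Union>k. L k)")
      case True
      then obtain k where "y \<in> L k"
        by blast
      with \<open>disjoint_family L\<close> have "e j x = e j x'" if "j \<noteq> k" for j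
        using e(4) x that unfolding disjoint_family_on_def by blast
      then have "(\<Sum>j. e j x) - (\<Sum>j. e j x') = e k x - e k x'"
        by (rule suminf_diff_eq_single[OF summable[OF x(1)] summable[OF x(2)]])
      also have "\<dots> = h y x - h y x'"
        using e(3) \<open>y \<in> L k\<close> x by simp
      finally show ?thesis .
    next
      case False
      then have "e k x = e k x'" for k
        using e(4) x by blast
      then show ?thesis
        using h_const[OF False x] by simp
    qed
  qed
qed

lemma fibre_empty_outside_topspace:
  assumes "continuous_map X Y \<pi>" "y \<notin> topspace Y"
  shows "fibre X \<pi> y = {}"
  using assms unfolding fibre_def by (auto dest: continuous_map_image_subset_topspace)

lemma in_c0_sum_dyadic_levels:
  assumes "compact_space X" "continuous_map X Y \<pi>" "t1_space Y" "in_c0_sum X Y \<pi> z h"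
  obtains c L where "c \<ge> 0" "\<And>k. finite (L k)" "disjoint_family L" "(\<Union>k. L k) \<subseteq> topspace Y"
    "\<And>k y x. y \<in> L k \<Longrightarrow> x \<in> fibre X \<pi> y \<Longrightarrow> \<bar>h y x\<bar> \<le> c * (1/2) ^ k"
    "\<And>y x. y \<notin> (\<Union>k. L k) \<Longrightarrow> x \<in> fibre X \<pi> y \<Longrightarrow> h y x = 0"
proof -
  have hc: "\<And>y. y \<in> topspace Y \<Longrightarrow> continuous_map (subtopology X (fibre X \<pi> y)) euclideanreal (h y)"
    and c0: "\<And>\<epsilon>. \<epsilon> > 0 \<Longrightarrow> finite {y \<in> topspace Y. fibre_norm X \<pi> y (h y) > \<epsilon>}"
    using assms(4) unfolding in_c0_sum_def by auto
  have h_le_norm: "\<bar>h y x\<bar> \<le> fibre_norm X \<pi> y (h y)" if "y \<in> topspace Y" "x \<in> fibre X \<pi> y" for y x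
    unfolding fibre_norm_def using abs_le_SUP_abs_compactin[OF
        closedin_compact_space[OF assms(1) closedin_fibre[OF assms(2,3)]] hc[OF that(1)] that(2)] .
  obtain c L where c: "c \<ge> 0" and L: "\<And>k. finite (L k)" "disjoint_family L"
    and L_eq: "(\<Union>k. L k) = {y \<in> topspace Y. fibre_norm X \<pi> y (h y) > 0}"
    and L_le: "\<And>k y. y \<in> L k \<Longrightarrow> fibre_norm X \<pi> y (h y) \<le> c * (1/2) ^ k"
    using vanishing_family_dyadic_levels[of "topspace Y" "\<lambda>y. fibre_norm X \<pi> y (h y)", OF c0] by blast
  have "(\<Union>k. L k) \<subseteq> topspace Y"
    using L_eq by blast
  moreover have "\<bar>h y x\<bar> \<le> c * (1/2) ^ k" if "y \<in> L k" "x \<in> fibre X \<pi> y" for k y x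
  proof -
    have "y \<in> topspace Y"
      using L_eq that(1) by blast
    with that show ?thesis
      using h_le_norm L_le order_trans by blast
  qed
  moreover have "h y x = 0" if "y \<notin> (\<Union>k. L k)" "x \<in> fibre X \<pi> y" for y x
  proof -
    have "y \<in> topspace Y"
      using fibre_empty_outside_topspace[OF assms(2)] that(2) by blast
    then have "\<not> fibre_norm X \<pi> y (h y) > 0"
      using L_eq that(1) by blast
    then show ?thesis
      using h_le_norm[OF \<open>y \<in> topspace Y\<close> that(2)] by arith
  qed
  ultimately show ?thesis
    using that[OF c L] by blast
qed

theorem lemma4p5:
  fixes X :: "'a topology" and Y :: "'b topology" and \<pi> :: "'a \<Rightarrow> 'b"
    and z :: "'b \<Rightarrow> 'a" and h :: "'b \<Rightarrow> 'a \<Rightarrow> real"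
  assumes "compact_space X" and "Hausdorff_space X"
    and "compact_space Y" and "Hausdorff_space Y"
    and "fully_closed X Y \<pi>"
    and "\<And>y. y \<in> topspace Y \<Longrightarrow> z y \<in> fibre X \<pi> y"
    and "in_c0_sum X Y \<pi> z h"
  shows "\<exists>f. continuous_map X euclideanreal f \<and>
           (\<forall>y \<in> topspace Y. \<forall>x \<in> fibre X \<pi> y. f x - f (z y) = h y x)"
proof -
  have cont: "continuous_map X Y \<pi>" and t1: "t1_space Y"
    using assms(4,5) by (simp_all add: fully_closed_def Hausdorff_imp_t1_space)
  have normal: "normal_space X" and closed: "closed_map X Y \<pi>"
    using assms(1,2,4) cont by (simp_all add: compact_Hausdorff_or_regular_imp_normal_space
        continuous_imp_closed_map)
  obtain c L where "c \<ge> 0" "\<And>k. finite (L k)" "disjoint_family L" "(\<Union>k. L k) \<subseteq> topspace Y"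
    and h_bound: "\<And>k y x. y \<in> L k \<Longrightarrow> x \<in> fibre X \<pi> y \<Longrightarrow> \<bar>h y x\<bar> \<le> c * (1/2) ^ k"
    and h_zero: "\<And>y x. y \<notin> (\<Union>k. L k) \<Longrightarrow> x \<in> fibre X \<pi> y \<Longrightarrow> h y x = 0"
    using in_c0_sum_dyadic_levels[OF assms(1) cont t1 assms(7)] by blast
  moreover have "\<And>y. y \<in> topspace Y \<Longrightarrow> continuous_map (subtopology X (fibre X \<pi> y)) euclideanreal (h y)"
    and hz: "\<And>y. y \<in> topspace Y \<Longrightarrow> h y (z y) = 0"
    using assms(7) unfolding in_c0_sum_def by auto
  ultimately have hc: "\<And>y. y \<in> (\<Union>k. L k) \<Longrightarrow> continuous_map (subtopology X (fibre X \<pi> y)) euclideanreal (h y)"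
    by blast
  have M_nonneg: "0 \<le> c * (1/2::real) ^ k" for k
    using \<open>c \<ge> 0\<close> by simp
  have M_summable: "summable (\<lambda>k. c * (1/2::real) ^ k)"
    by (intro summable_mult summable_geometric) simp
  have h_const: "h y x = h y x'" if "y \<notin> (\<Union>k. L k)" "x \<in> fibre X \<pi> y" "x' \<in> fibre X \<pi> y" for y x x'
    using h_zero[OF that(1)] that(2,3) by simp
  obtain f where "continuous_map X euclideanreal f"
    and "\<And>y x x'. x \<in> fibre X \<pi> y \<Longrightarrow> x' \<in> fibre X \<pi> y \<Longrightarrow> f x - f x' = h y x - h y x'"
    using fibrewise_extension_from_finite_levels[where L=L and M="\<lambda>k. c * (1/2) ^ k", OF normal t1 closed
        assms(5) \<open>\<And>k. finite (L k)\<close> \<open>disjoint_family L\<close> hc h_bound M_nonneg M_summable h_const] by blast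
  then show ?thesis
    using assms(6) hz by fastforce
qed

end
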